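(* Let $h$ be the Hahn sequence space and let $\Delta:h\to h$ be the forward difference operator $(\Delta x)_k=x_k-x_{k+1}$. Then the continuous spectrum of $\Delta$ on $h$ is $$\sigma_c(\Delta,h)=\{\alpha\in\mathbb{C}:|1-\alpha|=1\}.$$
   Context: Sequences are indexed by $\mathbb{N}=\{0,1,2,\dots\}$. The Hahn sequence space is $h=\{x=(x_k):\sum_{k=1}^\infty k|x_k-x_{k+1}|<\infty \text{ and } \lim_{k\to\infty}x_k=0\}$, a Banach space with norm $\|x\|_h=\sum_k k|x_k-x_{k+1}|+\sup_k|x_k|$. $\Delta$ is given by the matrix with $1$ on the main diagonal and $-1$ on the first superdiagonal. For a bounded operator $T$ on a Banach space $X$, the continuous spectrum $\sigma_c(T,X)$ is the set of $\alpha\in\mathbb{C}$ such that $\alpha I-T$ is injective, its range is dense in $X$, and its inverse (defined on the range) is unbounded. *)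

theory Defs
  imports "HOL-Analysis.Analysis"
begin

definition hahn :: "(nat \<Rightarrow> complex) set" where
  "hahn = {x. summable (\<lambda>k. real k * cmod (x k - x (Suc k))) \<and> x \<longlonglongrightarrow> 0}"

definition hahn_norm :: "(nat \<Rightarrow> complex) \<Rightarrow> real" where
  "hahn_norm x = (\<Sum>k. real k * cmod (x k - x (Suc k))) + (SUP k. cmod (x k))"

definition fwd_diff :: "(nat \<Rightarrow> complex) \<Rightarrow> (nat \<Rightarrow> complex)" where
  "fwd_diff x = (\<lambda>k. x k - x (Suc k))"

definition cont_spectrum ::
  "((nat \<Rightarrow> complex) \<Rightarrow> (nat \<Rightarrow> complex)) \<Rightarrow> (nat \<Rightarrow> complex) set
     \<Rightarrow> ((nat \<Rightarrow> complex) \<Rightarrow> real) \<Rightarrow> complex set" where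
  "cont_spectrum T X nrm =
     {\<alpha>. let S = (\<lambda>x. (\<lambda>k. \<alpha> * x k - T x k)) in
        inj_on S X
      \<and> (\<forall>y\<in>X. \<forall>\<epsilon>>0. \<exists>x\<in>X. nrm (\<lambda>k. S x k - y k) < \<epsilon>)
      \<and> \<not> (\<exists>C. \<forall>x\<in>X. nrm x \<le> C * nrm (S x))}"

end

theory Submission
  imports Defs
begin

text \<open>With \<open>b = 1 - \<alpha>\<close>, the operator \<open>\<alpha>I - \<Delta>\<close> is \<open>(S\<^sub>b x)\<^sub>k = x\<^sub>k\<^sub>+\<^sub>1 - b x\<^sub>k\<close>.
  If \<open>|b| < 1\<close>, the geometric sequence \<open>b\<^sup>k\<close> lies in \<open>h\<close> and is killed by \<open>S\<^sub>b\<close>.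
  For every \<open>b\<close>, writing \<open>b x\<^sub>k = x\<^sub>k\<^sub>+\<^sub>1 - (S\<^sub>b x)\<^sub>k\<close> and estimating termwise in both parts
  of the norm gives \<open>(|b| - 1) \<parallel>x\<parallel> \<le> \<parallel>S\<^sub>b x\<parallel>\<close>, so the inverse is bounded when \<open>|b| > 1\<close>.
  If \<open>|b| = 1\<close>, kernel elements have constant modulus and tend to 0, hence vanish;
  the sequences \<open>(r b)\<^sup>k\<close> satisfy \<open>\<parallel>S\<^sub>b x\<parallel> = (1 - r) \<parallel>x\<parallel>\<close>, so letting \<open>r \<rightarrow> 1\<close> the
  inverse is unbounded; and the range is dense because every truncation of \<open>y\<close> to its first
  \<open>N\<close> terms is in the range (solve backwards from \<open>x\<^sub>N = 0\<close>), while the tails of \<open>y\<close> tend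
  to 0 in the norm of \<open>h\<close>.\<close>

lemma cSUP_mult_left_nonneg:
  fixes f :: "'a \<Rightarrow> real"
  assumes "I \<noteq> {}" "bdd_above (f ` I)" "0 \<le> a"
  shows "(SUP i\<in>I. a * f i) = a * (SUP i\<in>I. f i)"
proof -
  have "continuous (at_left (Sup (f ` I))) ((*) a)"
    by (intro continuous_intros)
  then show ?thesis
    using continuous_at_Sup_mono[of "(*) a" "f ` I"] assms
    by (simp add: mono_def mult_left_mono image_comp)
qed

lemma summable_real_mult_power:
  assumes "0 \<le> (r::real)" "r < 1"
  shows "summable (\<lambda>n. real n * r ^ n)"
proof -
  have "summable (\<lambda>n. real (Suc n) * r ^ n)"
    using geometric_deriv_sums[of r] assms by (auto simp: sums_iff)
  then show ?thesis
    by (rule summable_comparison_test'[where N=0]) (use assms in \<open>auto intro!: mult_right_mono\<close>)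
qed

definition weighted_variation :: "(nat \<Rightarrow> complex) \<Rightarrow> real" where
  "weighted_variation x = (\<Sum>k. real k * cmod (x k - x (Suc k)))"

definition sup_norm :: "(nat \<Rightarrow> complex) \<Rightarrow> real" where
  "sup_norm x = (SUP k. cmod (x k))"

lemma hahn_norm_eq: "hahn_norm x = weighted_variation x + sup_norm x"
  by (simp add: hahn_norm_def weighted_variation_def sup_norm_def)

lemma power_in_hahn:
  assumes "cmod q < 1"
  shows "(\<lambda>k. q ^ k) \<in> hahn"
proof -
  have "q ^ k - q ^ Suc k = (1 - q) * q ^ k" for k
    by (simp add: algebra_simps)
  then have "(\<lambda>k. real k * cmod (q ^ k - q ^ Suc k)) = (\<lambda>k. cmod (1 - q) * (real k * cmod q ^ k))"
    by (simp add: fun_eq_iff norm_mult norm_power)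
  moreover have "summable (\<lambda>k. cmod (1 - q) * (real k * cmod q ^ k))"
    using summable_real_mult_power[of "cmod q"] assms by (intro summable_mult) auto
  ultimately show ?thesis
    using LIMSEQ_power_zero[OF assms] by (simp add: hahn_def)
qed

lemma finite_support_in_hahn:
  assumes "\<And>k. k \<ge> N \<Longrightarrow> x k = 0"
  shows "x \<in> hahn"
proof -
  have "(\<lambda>k. real k * cmod (x k - x (Suc k))) sums (\<Sum>k<N. real k * cmod (x k - x (Suc k)))"
    by (rule sums_finite) (auto simp: assms)
  moreover have "x \<longlonglongrightarrow> 0"
    by (rule tendsto_eventually) (use assms in \<open>auto simp: eventually_sequentially\<close>)
  ultimately show ?thesis
    by (auto simp: hahn_def sums_iff)
qed

lemma hahn_bdd_above_norm:
  assumes "x \<in> hahn"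
  shows "bdd_above (range (\<lambda>k. cmod (x k)))"
proof -
  have "convergent x"
    using assms by (auto simp: hahn_def convergent_def)
  then show ?thesis
    by (intro Bseq_bdd_above' convergent_imp_Bseq)
qed

lemma norm_le_hahn_norm:
  assumes "x \<in> hahn"
  shows "cmod (x j) \<le> hahn_norm x"
proof -
  have "0 \<le> (\<Sum>k. real k * cmod (x k - x (Suc k)))"
    using assms by (intro suminf_nonneg) (auto simp: hahn_def)
  moreover have "cmod (x j) \<le> (SUP k. cmod (x k))"
    using hahn_bdd_above_norm[OF assms] by (rule cSUP_upper2) auto
  ultimately show ?thesis
    by (simp add: hahn_norm_def)
qed

lemma hahn_norm_mult:
  assumes "x \<in> hahn"
  shows "hahn_norm (\<lambda>k. c * x k) = cmod c * hahn_norm x"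
proof -
  have s: "summable (\<lambda>k. real k * cmod (x k - x (Suc k)))"
    using assms by (simp add: hahn_def)
  have "(\<Sum>k. real k * cmod (c * x k - c * x (Suc k))) = cmod c * (\<Sum>k. real k * cmod (x k - x (Suc k)))"
    using suminf_mult[OF s, of "cmod c"]
    by (simp add: norm_mult mult.left_commute flip: right_diff_distrib)
  moreover have "(SUP k. cmod (c * x k)) = cmod c * (SUP k. cmod (x k))"
    using cSUP_mult_left_nonneg[OF _ hahn_bdd_above_norm[OF assms]] by (simp add: norm_mult)
  ultimately show ?thesis
    by (simp add: hahn_norm_def algebra_simps)
qed

lemma hahn_norm_uminus: "hahn_norm (\<lambda>k. - x k) = hahn_norm x"
proof -
  have "cmod (- x k - - x (Suc k)) = cmod (x k - x (Suc k))" for k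
    by (metis minus_diff_eq minus_diff_minus norm_minus_cancel)
  then show ?thesis
    by (simp add: hahn_norm_def)
qed

lemma norm_le_weighted_diff_tail:
  assumes "y \<in> hahn"
  shows "real n * cmod (y n) \<le> (\<Sum>i. real (i + n) * cmod (y (i + n) - y (Suc (i + n))))"
proof -
  define d where "d i = y (i + n) - y (Suc i + n)" for i
  have s: "summable (\<lambda>i. real (i + n) * cmod (d i))" and t: "y \<longlonglongrightarrow> 0"
    using assms summable_iff_shift[of "\<lambda>k. real k * cmod (y k - y (Suc k))" n]
    by (auto simp: hahn_def d_def)
  have "d sums y n"
    unfolding d_def using telescope_sums'[OF LIMSEQ_ignore_initial_segment[OF t, of n]] by simp
  then have "(\<lambda>i. of_nat n * d i) sums (of_nat n * y n)"
    by (rule sums_mult)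
  moreover have sn: "summable (\<lambda>i. norm (of_nat n * d i))"
    by (rule summable_comparison_test'[OF s, where N=0]) (simp add: norm_mult mult_right_mono)
  ultimately have "real n * cmod (y n) \<le> (\<Sum>i. norm (of_nat n * d i))"
    by (metis norm_mult norm_of_nat sums_unique summable_norm)
  also have "\<dots> \<le> (\<Sum>i. real (i + n) * cmod (d i))"
    using sn s by (intro suminf_le) (auto simp: norm_mult mult_right_mono)
  finally show ?thesis
    by (simp add: d_def)
qed

lemma hahn_norm_truncation_le:
  assumes y: "y \<in> hahn" and B: "\<And>k. k \<ge> N \<Longrightarrow> cmod (y k) \<le> B" "0 \<le> B"
  shows "hahn_norm (\<lambda>k. if k < N then 0 else y k)
    \<le> 2 * (\<Sum>i. real (i + N) * cmod (y (i + N) - y (Suc (i + N)))) + B"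
proof -
  define w where "w k = (if k < N then 0 else y k)" for k
  define f where "f k = real k * cmod (y k - y (Suc k))" for k
  define G where "G k = real k * cmod (w k - w (Suc k))" for k
  define T where "T = (\<Sum>i. f (i + N))"
  have "summable f"
    using y by (simp add: hahn_def f_def[abs_def])
  then have sT: "summable (\<lambda>i. f (i + N))"
    by (subst summable_iff_shift)
  have G_tail: "G (i + N) = f (i + N)" for i
    by (simp add: G_def f_def w_def)
  have sG: "summable G"
    using sT summable_iff_shift[of G N] by (simp add: G_tail)
  have head: "(\<Sum>k<N. G k) \<le> T"
  proof (cases N)
    case (Suc M)
    have "(\<Sum>k<N. G k) = G M"
      by (simp add: Suc G_def w_def)
    also have "\<dots> \<le> real N * cmod (y N)"
      by (simp add: Suc G_def w_def mult_right_mono)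
    also have "\<dots> \<le> T"
      using norm_le_weighted_diff_tail[OF y, of N] by (simp add: T_def f_def)
    finally show ?thesis .
  next
    case 0
    have "0 \<le> T"
      unfolding T_def by (rule suminf_nonneg[OF sT]) (simp add: f_def)
    then show ?thesis
      by (simp add: 0)
  qed
  have "(\<Sum>k. G k) = T + (\<Sum>k<N. G k)"
    using suminf_split_initial_segment[OF sG, of N] by (simp add: T_def G_tail)
  moreover have "(SUP k. cmod (w k)) \<le> B"
    using B by (intro cSUP_least) (auto simp: w_def)
  ultimately have "hahn_norm w \<le> 2 * T + B"
    using head by (simp add: hahn_norm_def G_def)
  then show ?thesis
    by (simp add: w_def[abs_def] T_def f_def)
qed

lemma hahn_truncation_approx:
  assumes y: "y \<in> hahn" and "\<epsilon> > 0"
  shows "\<exists>N. hahn_norm (\<lambda>k. if k < N then 0 else y k) < \<epsilon>"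
proof -
  define f where "f k = real k * cmod (y k - y (Suc k))" for k
  have "summable f" "y \<longlonglongrightarrow> 0"
    using y by (simp_all add: hahn_def f_def[abs_def])
  obtain N1 where N1: "\<And>n. n \<ge> N1 \<Longrightarrow> norm (\<Sum>i. f (i + n)) < \<epsilon> / 3"
    using suminf_exist_split[OF _ \<open>summable f\<close>, of "\<epsilon> / 3"] \<open>\<epsilon> > 0\<close> by auto
  obtain N2 where N2: "\<And>n. n \<ge> N2 \<Longrightarrow> cmod (y n) < \<epsilon> / 3"
    using \<open>y \<longlonglongrightarrow> 0\<close> \<open>\<epsilon> > 0\<close> unfolding LIMSEQ_iff by (metis diff_zero divide_pos_pos zero_less_numeral)
  define N where "N = max N1 N2"
  have "hahn_norm (\<lambda>k. if k < N then 0 else y k) \<le> 2 * (\<Sum>i. f (i + N)) + \<epsilon> / 3"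
    unfolding f_def using N2 \<open>\<epsilon> > 0\<close>
    by (intro hahn_norm_truncation_le[OF y]) (auto simp: N_def less_imp_le)
  also have "\<dots> < \<epsilon>"
    using N1[of N] by (simp add: N_def)
  finally show ?thesis ..
qed

definition shift_sub :: "complex \<Rightarrow> (nat \<Rightarrow> complex) \<Rightarrow> nat \<Rightarrow> complex" where
  "shift_sub b x = (\<lambda>k. x (Suc k) - b * x k)"

lemma mem_cont_spectrum_fwd_diff_iff:
  "\<alpha> \<in> cont_spectrum fwd_diff hahn hahn_norm \<longleftrightarrow>
     inj_on (shift_sub (1 - \<alpha>)) hahn
   \<and> (\<forall>y\<in>hahn. \<forall>\<epsilon>>0. \<exists>x\<in>hahn. hahn_norm (\<lambda>k. shift_sub (1 - \<alpha>) x k - y k) < \<epsilon>)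
   \<and> \<not> (\<exists>C. \<forall>x\<in>hahn. hahn_norm x \<le> C * hahn_norm (shift_sub (1 - \<alpha>) x))"
proof -
  have S: "(\<lambda>x k. \<alpha> * x k - fwd_diff x k) = shift_sub (1 - \<alpha>)"
    by (auto simp: fun_eq_iff shift_sub_def fwd_diff_def algebra_simps)
  show ?thesis
    unfolding cont_spectrum_def Let_def S[symmetric] by simp
qed

lemma shift_sub_in_hahn:
  assumes "x \<in> hahn"
  shows "shift_sub b x \<in> hahn"
proof -
  define d where "d k = x k - x (Suc k)" for k
  have s: "summable (\<lambda>k. real k * cmod (d k))" and t: "x \<longlonglongrightarrow> 0"
    using assms by (auto simp: hahn_def d_def)
  have s1: "summable (\<lambda>k. real (Suc k) * cmod (d (Suc k)))"
    using s by (subst summable_Suc_iff[where f="\<lambda>k. real k * cmod (d k)"])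
  have diff: "shift_sub b x k - shift_sub b x (Suc k) = d (Suc k) - b * d k" for k
    by (simp add: shift_sub_def d_def algebra_simps)
  have "real k * cmod (d (Suc k) - b * d k) \<le> real (Suc k) * cmod (d (Suc k)) + cmod b * (real k * cmod (d k))" for k
  proof -
    have "real k * cmod (d (Suc k) - b * d k) \<le> real k * (cmod (d (Suc k)) + cmod b * cmod (d k))"
      by (intro mult_left_mono) (auto intro: norm_triangle_le_diff simp: norm_mult)
    also have "\<dots> \<le> real (Suc k) * cmod (d (Suc k)) + cmod b * (real k * cmod (d k))"
      by (simp add: algebra_simps)
    finally show ?thesis .
  qed
  then have "summable (\<lambda>k. real k * cmod (shift_sub b x k - shift_sub b x (Suc k)))"
    unfolding diff
    by (intro summable_comparison_test'[OF summable_add[OF s1 summable_mult[OF s]], where N=0]) simp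
  moreover have "shift_sub b x \<longlonglongrightarrow> 0"
    unfolding shift_sub_def using LIMSEQ_Suc[OF t] tendsto_mult_right_zero[OF t]
    by (rule tendsto_diff[where b=0, simplified])
  ultimately show ?thesis
    by (simp add: hahn_def)
qed

lemma weighted_variation_shift_sub_ge:
  assumes "x \<in> hahn"
  shows "cmod b * weighted_variation x \<le> weighted_variation x + weighted_variation (shift_sub b x)"
proof -
  define d where "d k = x k - x (Suc k)" for k
  define e where "e k = shift_sub b x k - shift_sub b x (Suc k)" for k
  have s: "summable (\<lambda>k. real k * cmod (d k))"
    using assms by (simp add: hahn_def d_def)
  have se: "summable (\<lambda>k. real k * cmod (e k))"
    using shift_sub_in_hahn[OF assms] by (simp add: hahn_def e_def)
  have s1: "summable (\<lambda>k. real (Suc k) * cmod (d (Suc k)))"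
    using s by (subst summable_Suc_iff[where f="\<lambda>k. real k * cmod (d k)"])
  have pointwise: "cmod b * (real k * cmod (d k)) \<le> real (Suc k) * cmod (d (Suc k)) + real k * cmod (e k)" for k
  proof -
    have "b * d k = d (Suc k) - e k"
      by (simp add: d_def e_def shift_sub_def algebra_simps)
    then have "cmod b * cmod (d k) \<le> cmod (d (Suc k)) + cmod (e k)"
      by (metis norm_mult norm_triangle_ineq4)
    then have "real k * (cmod b * cmod (d k)) \<le> real k * (cmod (d (Suc k)) + cmod (e k))"
      by (rule mult_left_mono) simp
    also have "\<dots> \<le> real (Suc k) * cmod (d (Suc k)) + real k * cmod (e k)"
      by (simp add: algebra_simps)
    finally show ?thesis
      by (simp add: algebra_simps)
  qed
  have "cmod b * weighted_variation x = (\<Sum>k. cmod b * (real k * cmod (d k)))"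
    using suminf_mult[OF s] by (simp add: weighted_variation_def d_def)
  also have "\<dots> \<le> (\<Sum>k. real (Suc k) * cmod (d (Suc k)) + real k * cmod (e k))"
    using s s1 se pointwise by (intro suminf_le summable_mult summable_add) auto
  also have "\<dots> = (\<Sum>k. real (Suc k) * cmod (d (Suc k))) + weighted_variation (shift_sub b x)"
    using suminf_add[OF s1 se] by (simp add: weighted_variation_def e_def)
  also have "(\<Sum>k. real (Suc k) * cmod (d (Suc k))) = weighted_variation x"
    using suminf_split_head[OF s] by (simp add: weighted_variation_def d_def)
  finally show ?thesis .
qed

lemma sup_norm_shift_sub_ge:
  assumes "x \<in> hahn"
  shows "cmod b * sup_norm x \<le> sup_norm x + sup_norm (shift_sub b x)"
proof -
  have bx: "bdd_above (range (\<lambda>k. cmod (x k)))"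
    using hahn_bdd_above_norm[OF assms] .
  have bS: "bdd_above (range (\<lambda>k. cmod (shift_sub b x k)))"
    using hahn_bdd_above_norm[OF shift_sub_in_hahn[OF assms]] .
  have "cmod b * cmod (x k) \<le> sup_norm x + sup_norm (shift_sub b x)" for k
  proof -
    have "b * x k = x (Suc k) - shift_sub b x k"
      by (simp add: shift_sub_def)
    then have "cmod b * cmod (x k) \<le> cmod (x (Suc k)) + cmod (shift_sub b x k)"
      by (metis norm_mult norm_triangle_ineq4)
    also have "\<dots> \<le> sup_norm x + sup_norm (shift_sub b x)"
      unfolding sup_norm_def by (intro add_mono cSUP_upper bx bS) auto
    finally show ?thesis .
  qed
  then have "(SUP k. cmod b * cmod (x k)) \<le> sup_norm x + sup_norm (shift_sub b x)"
    by (intro cSUP_least) auto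
  then show ?thesis
    by (simp add: sup_norm_def cSUP_mult_left_nonneg[OF _ bx])
qed

lemma hahn_norm_shift_sub_ge:
  assumes "x \<in> hahn"
  shows "(cmod b - 1) * hahn_norm x \<le> hahn_norm (shift_sub b x)"
  using weighted_variation_shift_sub_ge[OF assms, of b] sup_norm_shift_sub_ge[OF assms, of b]
  by (simp add: hahn_norm_eq algebra_simps)

lemma not_inj_on_shift_sub:
  assumes "cmod b < 1"
  shows "\<not> inj_on (shift_sub b) hahn"
proof
  assume inj: "inj_on (shift_sub b) hahn"
  have "shift_sub b (\<lambda>k. b ^ k) = shift_sub b (\<lambda>k. 0)"
    by (simp add: shift_sub_def fun_eq_iff)
  then have "(\<lambda>k. b ^ k) = (\<lambda>k. 0)"
    using inj power_in_hahn[OF assms] finite_support_in_hahn[of 0] by (auto dest: inj_onD)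
  then show False
    by (metis power_0 zero_neq_one)
qed

lemma inj_on_shift_sub:
  assumes b: "cmod b = 1"
  shows "inj_on (shift_sub b) hahn"
proof (rule inj_onI)
  fix x y
  assume "x \<in> hahn" "y \<in> hahn" and eq: "shift_sub b x = shift_sub b y"
  define z where "z k = x k - y k" for k
  have step: "z (Suc k) = b * z k" for k
    using fun_cong[OF eq, of k] by (simp add: shift_sub_def z_def algebra_simps)
  have const: "cmod (z k) = cmod (z 0)" for k
    by (induction k) (simp_all add: step norm_mult b)
  have "x \<longlonglongrightarrow> 0" "y \<longlonglongrightarrow> 0"
    using \<open>x \<in> hahn\<close> \<open>y \<in> hahn\<close> by (simp_all add: hahn_def)
  then have "z \<longlonglongrightarrow> 0"
    unfolding z_def using tendsto_diff by fastforce
  then have "(\<lambda>k. cmod (z k)) \<longlonglongrightarrow> 0"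
    by (rule tendsto_norm_zero)
  moreover have "(\<lambda>k. cmod (z k)) = (\<lambda>_. cmod (z 0))"
    using const by blast
  ultimately have "z 0 = 0"
    by (simp add: LIMSEQ_const_iff)
  then have "z k = 0" for k
    using const[of k] by simp
  then show "x = y"
    by (auto simp: z_def fun_eq_iff)
qed

lemma hahn_norm_shift_sub_power:
  assumes b: "cmod b = 1" and r: "0 \<le> r" "r < 1"
  shows "hahn_norm (shift_sub b (\<lambda>k. (of_real r * b) ^ k)) = (1 - r) * hahn_norm (\<lambda>k. (of_real r * b) ^ k)"
proof -
  have "shift_sub b (\<lambda>k. (of_real r * b) ^ k) = (\<lambda>k. (b * of_real (r - 1)) * (of_real r * b) ^ k)"
    by (simp add: shift_sub_def fun_eq_iff algebra_simps)
  moreover have "cmod (b * of_real (r - 1)) = 1 - r"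
    using b r by (simp only: norm_mult norm_of_real) simp
  moreover have "(\<lambda>k. (of_real r * b) ^ k) \<in> hahn"
    using b r by (intro power_in_hahn) (simp add: norm_mult)
  ultimately show ?thesis
    by (simp add: hahn_norm_mult)
qed

lemma shift_sub_not_bounded_below:
  assumes b: "cmod b = 1"
  shows "\<not> (\<exists>C. \<forall>x\<in>hahn. hahn_norm x \<le> C * hahn_norm (shift_sub b x))"
proof
  assume "\<exists>C. \<forall>x\<in>hahn. hahn_norm x \<le> C * hahn_norm (shift_sub b x)"
  then obtain C where C: "\<And>x. x \<in> hahn \<Longrightarrow> hahn_norm x \<le> C * hahn_norm (shift_sub b x)"
    by blast
  define r :: real where "r = 1 - 1 / (2 * (\<bar>C\<bar> + 1))"
  have r: "0 \<le> r" "r < 1" and Cr: "C * (1 - r) < 1"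
    unfolding r_def by (auto simp: field_simps)
  define x where "x = (\<lambda>k. (of_real r * b) ^ k)"
  have xh: "x \<in> hahn"
    unfolding x_def using b r by (intro power_in_hahn) (simp add: norm_mult)
  have "1 \<le> hahn_norm x"
    using norm_le_hahn_norm[OF xh, of 0] by (simp add: x_def)
  then have "C * (1 - r) * hahn_norm x < hahn_norm x"
    using mult_strict_right_mono[OF Cr, of "hahn_norm x"] by simp
  moreover have "hahn_norm (shift_sub b x) = (1 - r) * hahn_norm x"
    unfolding x_def by (rule hahn_norm_shift_sub_power[OF b r])
  then have "hahn_norm x \<le> C * (1 - r) * hahn_norm x"
    using C[OF xh] by (simp add: mult.assoc)
  ultimately show False
    by linarith
qed

lemma shift_sub_solves_truncation:
  assumes b: "b \<noteq> 0"
  shows "\<exists>x. (\<forall>k\<ge>N. x k = 0) \<and> shift_sub b x = (\<lambda>k. if k < N then y k else 0)"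
proof -
  define x where "x k = - (\<Sum>j=k..<N. y j / b ^ (Suc j - k))" for k
  have "b * x k = - (\<Sum>j=k..<N. y j / b ^ (j - k))" for k
  proof -
    have "b * (y j / b ^ (Suc j - k)) = y j / b ^ (j - k)" if "k \<le> j" for j
      using b that by (simp add: Suc_diff_le)
    then show ?thesis
      by (simp add: x_def sum_distrib_left)
  qed
  moreover have "x (Suc k) = - (\<Sum>j=Suc k..<N. y j / b ^ (j - k))" for k
    by (simp add: x_def)
  ultimately have "shift_sub b x k = (if k < N then y k else 0)" for k
    by (simp add: shift_sub_def sum.atLeast_Suc_lessThan)
  moreover have "x k = 0" if "k \<ge> N" for k
    using that by (simp add: x_def)
  ultimately show ?thesis
    by auto
qed

lemma shift_sub_dense_range:
  assumes b: "b \<noteq> 0" and y: "y \<in> hahn" and "\<epsilon> > 0"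
  shows "\<exists>x\<in>hahn. hahn_norm (\<lambda>k. shift_sub b x k - y k) < \<epsilon>"
proof -
  obtain N where N: "hahn_norm (\<lambda>k. if k < N then 0 else y k) < \<epsilon>"
    using hahn_truncation_approx[OF y \<open>\<epsilon> > 0\<close>] by blast
  obtain x where x: "\<forall>k\<ge>N. x k = 0" "shift_sub b x = (\<lambda>k. if k < N then y k else 0)"
    using shift_sub_solves_truncation[OF b] by blast
  have "(\<lambda>k. shift_sub b x k - y k) = (\<lambda>k. - (if k < N then 0 else y k))"
    using x(2) by auto
  then have "hahn_norm (\<lambda>k. shift_sub b x k - y k) < \<epsilon>"
    using N by (simp only: hahn_norm_uminus)
  moreover have "x \<in> hahn"
    using x(1) by (intro finite_support_in_hahn) auto
  ultimately show ?thesis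
    by blast
qed

theorem theorem4p6:
  shows "cont_spectrum fwd_diff hahn hahn_norm = {\<alpha>. cmod (1 - \<alpha>) = 1}"
proof (rule set_eqI)
  fix \<alpha> :: complex
  define b where "b = 1 - \<alpha>"
  consider "cmod b < 1" | "cmod b = 1" | "cmod b > 1"
    by linarith
  then show "\<alpha> \<in> cont_spectrum fwd_diff hahn hahn_norm \<longleftrightarrow> \<alpha> \<in> {\<alpha>. cmod (1 - \<alpha>) = 1}"
  proof cases
    case 1
    then show ?thesis
      using not_inj_on_shift_sub by (auto simp: mem_cont_spectrum_fwd_diff_iff b_def)
  next
    case 2
    then have "b \<noteq> 0"
      by auto
    with 2 show ?thesis
      using inj_on_shift_sub shift_sub_dense_range shift_sub_not_bounded_below
      by (auto simp: mem_cont_spectrum_fwd_diff_iff b_def)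
  next
    case 3
    then have "\<exists>C. \<forall>x\<in>hahn. hahn_norm x \<le> C * hahn_norm (shift_sub b x)"
      using hahn_norm_shift_sub_ge by (intro exI[of _ "1 / (cmod b - 1)"]) (simp add: field_simps)
    with 3 show ?thesis
      by (auto simp: mem_cont_spectrum_fwd_diff_iff b_def)
  qed
qed

end
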